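(* Let $n,b$ be integers with $1<n<b$, let $C$ be an $(n,b)$-permutiple class, and let $G_C$ be its graph. The following statements are equivalent: (1) $\overline{G}_C$ is the graph of a permutiple class, i.e. there is an $(n,b)$-permutiple $q$ with $G_q=\overline{G}_C$; (2) the state $0$ is a vertex of $\overline{\Gamma}_C$; (3) the state $n-1$ is a vertex of $\Gamma_C$.
   Context: For digits $0\le d_j<b$, $(d_k,\ldots,d_0)_b$ denotes $\sum_{j=0}^k d_jb^j$ (leading zero digits allowed). For a permutation $\sigma$ of $\{0,\ldots,k\}$, $(d_k,\ldots,d_0)_b$ is an $(n,b,\sigma)$-permutiple if $(d_k,\ldots,d_0)_b=n\cdot(d_{\sigma(k)},\ldots,d_{\sigma(0)})_b$, and an $(n,b)$-permutiple if this holds for some $\sigma$. The graph $G_p$ of such a $p$ is the directed graph with vertex set $\{0,\ldots,b-1\}$ and edge set $\{(d_j,d_{\sigma(j)})\mid 0\le j\le k\}$. The class of an $(n,b)$-permutiple $p$ is the set $C$ of all $(n,b)$-permutiples $q$ with $G_q$ a subgraph of $G_p$; its graph is $G_C=G_p$. For a digit $d$ put $\overline d=b-1-d$, for a state $c\in\{0,\ldots,n-1\}$ put $\overline c=n-1-c$. The reflection $\overline{G}$ of a directed graph $G$ on $\{0,\ldots,b-1\}$ has the same vertices and edges $(\overline{d}_1,\overline{d}_2)$ for edges $(d_1,d_2)$ of $G$. Let $\lambda(x)$ be the least non-negative residue of $x$ mod $b$; the mother graph $M$ is the directed graph on $\{0,\ldots,b-1\}$ with edges the pairs $(d_1,d_2)$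 with $\lambda(d_1+(b-n)d_2)\le n-1$. The Hoey-Sloane graph $\Gamma$ is the edge-labelled directed graph on states $\{0,\ldots,n-1\}$ in which $(c_1,c_2)$ is an edge labelled by every edge $(d_1,d_2)$ of $M$ with $n d_2-d_1+c_1=bc_2$ (an edge exists iff there is at least one such label). The cycle image of a directed cycle $C_0$ of $M$ is the edge-labelled subgraph of $\Gamma$ with edges the $(c_1,c_2)$ for which $\{(d_1,d_2)\in C_0\mid n d_2-d_1+c_1=bc_2\}$ is nonempty, labelled by this set, and vertices the endpoints of these edges. $\Gamma_C$ is the union (of vertices, edges and labels) of the cycle images of the directed cycles of $M$ contained in $G_C$. The reflection $\overline{\Gamma}_C$ has vertices $\overline{c}$, edges $(\overline{c}_1,\overline{c}_2)$ and labels $(\overline{d}_1,\overline{d}_2)$ for the vertices $c$, edges $(c_1,c_2)$ and labels $(d_1,d_2)$ of $\Gamma_C$. *)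

theory Defs
  imports "HOL-Combinatorics.Permutations"
begin

text \<open>A digit string (d_k,...,d_0)_b is given by k and a function d :: nat => nat
  (only the values d j for j \<le> k matter).\<close>

definition digval :: "nat \<Rightarrow> nat \<Rightarrow> (nat \<Rightarrow> nat) \<Rightarrow> nat" where
  "digval b k d = (\<Sum>j = 0..k. d j * b ^ j)"

definition is_permutiple_sigma :: "nat \<Rightarrow> nat \<Rightarrow> nat \<Rightarrow> (nat \<Rightarrow> nat) \<Rightarrow> (nat \<Rightarrow> nat) \<Rightarrow> bool" where
  "is_permutiple_sigma n b k d \<sigma> \<longleftrightarrow>
     (\<forall>j\<le>k. d j < b) \<and> \<sigma> permutes {0..k} \<and>
     digval b k d = n * digval b k (d \<circ> \<sigma>)"

definition perm_graph :: "nat \<Rightarrow> (nat \<Rightarrow> nat) \<Rightarrow> (nat \<Rightarrow> nat) \<Rightarrow> (nat \<times> nat) set" where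
  "perm_graph k d \<sigma> = {(d j, d (\<sigma> j)) | j. j \<le> k}"

definition dbar :: "nat \<Rightarrow> nat \<Rightarrow> nat" where
  "dbar b x = b - 1 - x"

definition reflect_graph :: "nat \<Rightarrow> (nat \<times> nat) set \<Rightarrow> (nat \<times> nat) set" where
  "reflect_graph b G = {(dbar b d1, dbar b d2) | d1 d2. (d1, d2) \<in> G}"

definition mother_graph :: "nat \<Rightarrow> nat \<Rightarrow> (nat \<times> nat) set" where
  "mother_graph n b = {(d1, d2). d1 < b \<and> d2 < b \<and> (d1 + (b - n) * d2) mod b \<le> n - 1}"

definition cycle_edges :: "nat list \<Rightarrow> (nat \<times> nat) set" where
  "cycle_edges vs = {(vs ! i, vs ! ((i + 1) mod length vs)) | i. i < length vs}"

definition is_dcycle :: "(nat \<times> nat) set \<Rightarrow> nat list \<Rightarrow> bool" where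
  "is_dcycle E vs \<longleftrightarrow> vs \<noteq> [] \<and> distinct vs \<and> cycle_edges vs \<subseteq> E"

definition cycle_image :: "nat \<Rightarrow> nat \<Rightarrow> (nat \<times> nat) set \<Rightarrow> (nat \<times> nat \<times> (nat \<times> nat)) set" where
  "cycle_image n b C0 = {(c1, c2, (d1, d2)) | c1 c2 d1 d2.
      c1 < n \<and> c2 < n \<and> (d1, d2) \<in> C0 \<and>
      int n * int d2 - int d1 + int c1 = int b * int c2}"

definition Gamma_lab :: "nat \<Rightarrow> nat \<Rightarrow> (nat \<times> nat) set \<Rightarrow> (nat \<times> nat \<times> (nat \<times> nat)) set" where
  "Gamma_lab n b G = (\<Union>vs \<in> {vs. is_dcycle (mother_graph n b) vs \<and> cycle_edges vs \<subseteq> G}.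
                         cycle_image n b (cycle_edges vs))"

definition lab_vertices :: "(nat \<times> nat \<times> (nat \<times> nat)) set \<Rightarrow> nat set" where
  "lab_vertices L = {c1 | c1 c2 l. (c1, c2, l) \<in> L} \<union> {c2 | c1 c2 l. (c1, c2, l) \<in> L}"

definition lab_edges :: "(nat \<times> nat \<times> (nat \<times> nat)) set \<Rightarrow> (nat \<times> nat) set" where
  "lab_edges L = {(c1, c2) | c1 c2 l. (c1, c2, l) \<in> L}"

definition reflect_lab :: "nat \<Rightarrow> nat \<Rightarrow> (nat \<times> nat \<times> (nat \<times> nat)) set \<Rightarrow> (nat \<times> nat \<times> (nat \<times> nat)) set" where
  "reflect_lab n b L = {(n - 1 - c1, n - 1 - c2, (dbar b d1, dbar b d2)) | c1 c2 d1 d2. (c1, c2, (d1, d2)) \<in> L}"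

end

theory Submission
  imports Defs "HOL-Library.Transitive_Closure_Table"
begin

(* Write x = (d_k,...,d_0)_b and y = (d_sigma(k),...,d_sigma(0))_b, so x = n y. Schoolbook
   multiplication of y by n has carries c_0 = 0, ..., c_(k+1) = 0 in {0..n-1} with
   n y_j + c_j = x_j + b c_(j+1), so (c_j, c_(j+1)) is a Hoey-Sloane edge labelled by the edge
   (d_j, d_sigma(j)) of G_C. As sigma is a permutation, every edge of G_C lies on a directed cycle
   of G_C, which is contained in M; hence Gamma_C is the cycle image of all of G_C, and since the
   carry equation determines the states of an edge from its label, these states are carries of p.
   The reflection (c, d) |-> (n-1-c, b-1-d) preserves the carry equation. Hence if q has graph
   the reflection of G_C, the vertex 0 = c_0 of Gamma_q is the image of a vertex n-1 of Gamma_C.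
   Conversely, a carry c_m = n-1 means that the m lowest digits satisfy n y' - x' = (n-1) b^m;
   rotating the digits by m places and complementing them then turns p into a permutiple whose
   graph is the reflection of G_C. *)

definition low_value :: "nat \<Rightarrow> (nat \<Rightarrow> nat) \<Rightarrow> nat \<Rightarrow> int" where
  "low_value b x j = (\<Sum>i<j. int (x i) * int b ^ i)"

lemma low_value_0 [simp]: "low_value b x 0 = 0"
  by (simp add: low_value_def)

lemma low_value_Suc: "low_value b x (Suc j) = low_value b x j + int (x j) * int b ^ j"
  by (simp add: low_value_def)

lemma low_value_cong:
  "(\<And>i. i < j \<Longrightarrow> x i = x' i) \<Longrightarrow> low_value b x j = low_value b x' j"
  by (simp add: low_value_def)

lemma low_value_nonneg: "0 \<le> low_value b x j"
  by (simp add: low_value_def sum_nonneg)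

lemma low_value_less:
  assumes "\<And>i. i < j \<Longrightarrow> x i < b"
  shows "low_value b x j < int b ^ j"
  using assms
proof (induction j)
  case 0
  then show ?case by simp
next
  case (Suc j)
  then have "int (x j) * int b ^ j \<le> (int b - 1) * int b ^ j"
    by (intro mult_right_mono) auto
  moreover have "low_value b x j < int b ^ j"
    using Suc by simp
  ultimately show ?case
    by (simp add: low_value_Suc algebra_simps)
qed

lemma low_value_add:
  "low_value b x (m + t) = low_value b x m + int b ^ m * low_value b (\<lambda>i. x (i + m)) t"
  by (induction t) (simp_all add: low_value_Suc algebra_simps power_add)

lemma digval_eq_low_value: "int (digval b k x) = low_value b x (Suc k)"
  by (simp add: digval_def low_value_def atLeast0AtMost lessThan_Suc_atMost)

lemma low_value_rotate:
  assumes "m \<le> N"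
  shows "low_value b (\<lambda>i. x ((i + m) mod N)) N
    = low_value b (\<lambda>i. x (i + m)) (N - m) + int b ^ (N - m) * low_value b x m"
proof -
  have "low_value b (\<lambda>i. x ((i + m) mod N)) (N - m) = low_value b (\<lambda>i. x (i + m)) (N - m)"
    by (rule low_value_cong) simp
  moreover have "low_value b (\<lambda>i. x ((i + (N - m) + m) mod N)) m = low_value b x m"
    using assms by (intro low_value_cong) simp
  ultimately show ?thesis
    using low_value_add[of b "\<lambda>i. x ((i + m) mod N)" "N - m" m] assms by simp
qed

lemma low_value_complement:
  assumes "\<And>i. i < N \<Longrightarrow> x i < b"
  shows "low_value b (\<lambda>i. dbar b (x i)) N = int b ^ N - 1 - low_value b x N"
  using assms
proof (induction N)
  case 0
  then show ?case by simp
next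
  case (Suc N)
  then have "x N < b"
    by simp
  then have dbar_int: "int (dbar b (x N)) = int b - 1 - int (x N)"
    by (simp add: dbar_def)
  have "int (dbar b (x N)) * int b ^ N = int b ^ Suc N - int b ^ N - int (x N) * int b ^ N"
    unfolding dbar_int by (simp add: algebra_simps)
  with Suc show ?case
    by (simp add: low_value_Suc)
qed

locale digit_multiple =
  fixes n b N :: nat and x y :: "nat \<Rightarrow> nat"
  assumes n_pos: "0 < n"
    and x_digits: "\<And>i. i < N \<Longrightarrow> x i < b"
    and y_digits: "\<And>i. i < N \<Longrightarrow> y i < b"
    and multiple: "low_value b x N = int n * low_value b y N"
begin

definition carry :: "nat \<Rightarrow> nat" where
  "carry j = nat ((int n * low_value b y j - low_value b x j) div int b ^ j)"

lemma power_base_pos: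
  assumes "j \<le> N"
  shows "0 < int b ^ j"
proof (cases j)
  case (Suc i)
  then have "x 0 < b"
    using x_digits assms by simp
  then show ?thesis
    by simp
qed simp

lemma carry_eq_and_less:
  assumes "j \<le> N"
  shows "int n * low_value b y j - low_value b x j = int (carry j) * int b ^ j \<and> carry j < n"
proof -
  define h where "h = low_value b (\<lambda>i. x (i + j)) (N - j)
    - int n * low_value b (\<lambda>i. y (i + j)) (N - j)"
  have split: "low_value b z N
      = low_value b z j + int b ^ j * low_value b (\<lambda>i. z (i + j)) (N - j)" for z
    using low_value_add[of b z j "N - j"] assms by simp
  have eq: "int n * low_value b y j - low_value b x j = h * int b ^ j"
    using multiple split[of x] split[of y] by (simp add: h_def algebra_simps)
  have pos: "0 < int b ^ j"
    using power_base_pos[OF assms] .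
  have lx: "low_value b x j < int b ^ j" and ly: "low_value b y j < int b ^ j"
    using low_value_less[of j x b] low_value_less[of j y b] x_digits y_digits assms by fastforce+
  have "0 \<le> int n * low_value b y j"
    using low_value_nonneg[of b y j] by simp
  then have "(-1) * int b ^ j < h * int b ^ j"
    using eq lx by linarith
  then have "-1 < h"
    by (simp only: mult_less_cancel_right_pos[OF pos])
  have "int n * low_value b y j < int n * int b ^ j"
    using ly n_pos by simp
  then have "h * int b ^ j < int n * int b ^ j"
    using eq low_value_nonneg[of b x j] by linarith
  then have "h < int n"
    by (simp only: mult_less_cancel_right_pos[OF pos])
  moreover have "carry j = nat h"
    unfolding carry_def eq using pos by simp
  ultimately show ?thesis
    using eq \<open>-1 < h\<close> by simp
qed

lemma carry_eq:
  "j \<le> N \<Longrightarrow> int n * low_value b y j - low_value b x j = int (carry j) * int b ^ j"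
  using carry_eq_and_less by blast

lemma carry_less: "j \<le> N \<Longrightarrow> carry j < n"
  using carry_eq_and_less by blast

lemma carry_0 [simp]: "carry 0 = 0"
  by (simp add: carry_def)

lemma carry_step:
  assumes "j < N"
  shows "int n * int (y j) + int (carry j) = int (x j) + int b * int (carry (Suc j))"
proof -
  have "(int n * int (y j) + int (carry j)) * int b ^ j
      = (int (x j) + int b * int (carry (Suc j))) * int b ^ j"
    using carry_eq[of j] carry_eq[of "Suc j"] assms by (simp add: low_value_Suc algebra_simps)
  then show ?thesis
    using power_base_pos[of j] assms by auto
qed

lemma rotated_complement_multiple:
  assumes "m \<le> N" and "carry m = n - 1"
  shows "low_value b (\<lambda>i. dbar b (x ((i + m) mod N))) N
    = int n * low_value b (\<lambda>i. dbar b (y ((i + m) mod N))) N"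
proof -
  define X Y where "X = int b ^ m" and "Y = int b ^ (N - m)"
  define hx hy where "hx = low_value b (\<lambda>i. x (i + m)) (N - m)"
    and "hy = low_value b (\<lambda>i. y (i + m)) (N - m)"
  have XY: "int b ^ N = X * Y"
    using assms(1) by (simp add: X_def Y_def flip: power_add)
  have low: "int n * low_value b y m - low_value b x m = (int n - 1) * X"
    using carry_eq[OF assms(1)] assms(2) n_pos by (simp add: X_def)
  have "low_value b x N = low_value b x m + X * hx" "low_value b y N = low_value b y m + X * hy"
    using low_value_add[of b _ m "N - m"] assms(1) by (simp_all add: X_def hx_def hy_def)
  then have "X * (hx - int n * hy - (int n - 1)) = 0"
    using multiple low by (simp add: algebra_simps)
  then have high: "hx = int n * hy + (int n - 1)"
    using power_base_pos[OF assms(1)] by (auto simp: X_def)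
  have complement: "low_value b (\<lambda>i. dbar b (z ((i + m) mod N))) N
      = X * Y - 1 - (low_value b (\<lambda>i. z (i + m)) (N - m) + Y * low_value b z m)"
    if "\<And>i. i < N \<Longrightarrow> z i < b" for z
    using low_value_complement[of N "\<lambda>i. z ((i + m) mod N)" b] low_value_rotate[OF assms(1)] that
    by (simp add: XY Y_def)
  have low_x: "low_value b x m = int n * low_value b y m - (int n - 1) * X"
    using low by simp
  have cx: "low_value b (\<lambda>i. dbar b (x ((i + m) mod N))) N
      = X * Y - 1 - (hx + Y * low_value b x m)"
    using complement[OF x_digits] by (simp add: hx_def)
  have cy: "low_value b (\<lambda>i. dbar b (y ((i + m) mod N))) N
      = X * Y - 1 - (hy + Y * low_value b y m)"
    using complement[OF y_digits] by (simp add: hy_def)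
  show ?thesis
    unfolding cx cy high low_x by (simp add: algebra_simps)
qed

end

lemma edge_on_dcycle:
  assumes "(x, y) \<in> E" and "(y, x) \<in> E\<^sup>*"
  shows "\<exists>vs. is_dcycle E vs \<and> (x, y) \<in> cycle_edges vs"
proof -
  let ?R = "\<lambda>u v. (u, v) \<in> E"
  have "?R\<^sup>*\<^sup>* y x"
    using assms(2) by (simp add: rtrancl_def)
  then obtain ps where path: "rtrancl_path ?R y ps x" and dist: "distinct (y # ps)"
    by (metis rtranclp_eq_rtrancl_path rtrancl_path_distinct)
  define vs where "vs = y # ps"
  have last: "vs ! length ps = x"
  proof (cases "ps = []")
    case True
    then show ?thesis
      using path by (auto simp: vs_def elim: rtrancl_path.cases)
  next
    case False
    then show ?thesis
      using rtrancl_path_last[OF path] by (simp add: vs_def last_conv_nth)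
  qed
  have "(vs ! i, vs ! ((i + 1) mod length vs)) \<in> E" if "i < length vs" for i
  proof (cases "i < length ps")
    case True
    then show ?thesis
      using rtrancl_path_nth[OF path True] by (simp add: vs_def)
  next
    case False
    then have "i = length ps"
      using that by (simp add: vs_def)
    then show ?thesis
      using last assms(1) by (simp add: vs_def)
  qed
  then have "cycle_edges vs \<subseteq> E"
    by (auto simp: cycle_edges_def)
  moreover have "(x, y) \<in> cycle_edges vs"
    unfolding cycle_edges_def using last by (force simp: vs_def)
  ultimately show ?thesis
    using dist by (auto simp: is_dcycle_def vs_def)
qed

lemma Gamma_lab_eq_cycle_image:
  assumes "G \<subseteq> mother_graph n b" and "\<And>x y. (x, y) \<in> G \<Longrightarrow> (y, x) \<in> G\<^sup>*"
  shows "Gamma_lab n b G = cycle_image n b G"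
proof
  show "Gamma_lab n b G \<subseteq> cycle_image n b G"
    unfolding Gamma_lab_def cycle_image_def by blast
  show "cycle_image n b G \<subseteq> Gamma_lab n b G"
  proof
    fix e assume e: "e \<in> cycle_image n b G"
    then obtain c1 c2 x y where e_def: "e = (c1, c2, (x, y))" and xy: "(x, y) \<in> G"
      by (auto simp: cycle_image_def)
    obtain vs where "is_dcycle G vs" and on_cycle: "(x, y) \<in> cycle_edges vs"
      using edge_on_dcycle[OF xy assms(2)[OF xy]] by blast
    then have "is_dcycle (mother_graph n b) vs" and "cycle_edges vs \<subseteq> G"
      using assms(1) by (auto simp: is_dcycle_def)
    moreover have "e \<in> cycle_image n b (cycle_edges vs)"
      using e on_cycle by (auto simp: cycle_image_def e_def)
    ultimately show "e \<in> Gamma_lab n b G"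
      unfolding Gamma_lab_def by blast
  qed
qed

lemma carry_equation_reflect:
  assumes "x < b" "y < b" "c1 < n" "c2 < n"
  shows "int n * int (dbar b y) - int (dbar b x) + int (n - 1 - c1) = int b * int (n - 1 - c2)
    \<longleftrightarrow> int n * int y - int x + int c1 = int b * int c2"
proof -
  have "int (dbar b x) = int b - 1 - int x" "int (dbar b y) = int b - 1 - int y"
    "int (n - 1 - c1) = int n - 1 - int c1" "int (n - 1 - c2) = int n - 1 - int c2"
    using assms by (simp_all add: dbar_def of_nat_diff)
  then show ?thesis
    by (simp only:) (auto simp: algebra_simps)
qed

lemma carry_equation_unique:
  assumes "int n * int y - int x + int c1 = int b * int c2"
    and "int n * int y - int x + int e1 = int b * int e2"
    and "c1 < b" and "e1 < b"
  shows "c1 = e1 \<and> c2 = e2"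
proof -
  have diff: "int c1 - int e1 = int b * (int c2 - int e2)"
    using assms(1,2) by (simp add: algebra_simps)
  have "c1 = e1"
  proof (rule ccontr)
    assume "c1 \<noteq> e1"
    then have "\<bar>int b\<bar> \<le> \<bar>int c1 - int e1\<bar>"
      using diff assms(3) by (intro dvd_imp_le_int) auto
    then show False
      using assms(3,4) by linarith
  qed
  moreover have "0 < b"
    using assms(3) by simp
  ultimately show ?thesis
    using diff by simp
qed

lemma cycle_image_reflect_graph:
  assumes "G \<subseteq> {..<b} \<times> {..<b}"
  shows "cycle_image n b (reflect_graph b G) = reflect_lab n b (cycle_image n b G)"
proof
  show "cycle_image n b (reflect_graph b G) \<subseteq> reflect_lab n b (cycle_image n b G)"
  proof
    fix e assume "e \<in> cycle_image n b (reflect_graph b G)"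
    then obtain c1 c2 x y where e: "e = (c1, c2, (dbar b x, dbar b y))" "(x, y) \<in> G"
      "c1 < n" "c2 < n" "int n * int (dbar b y) - int (dbar b x) + int c1 = int b * int c2"
      by (auto simp: cycle_image_def reflect_graph_def)
    have "x < b" "y < b"
      using e(2) assms by auto
    then have "(n - 1 - c1, n - 1 - c2, (x, y)) \<in> cycle_image n b G"
      using e carry_equation_reflect[of x b y "n - 1 - c1" n "n - 1 - c2"]
      by (auto simp: cycle_image_def)
    moreover have "e = (n - 1 - (n - 1 - c1), n - 1 - (n - 1 - c2), (dbar b x, dbar b y))"
      using e by simp
    ultimately show "e \<in> reflect_lab n b (cycle_image n b G)"
      unfolding reflect_lab_def by blast
  qed
  show "reflect_lab n b (cycle_image n b G) \<subseteq> cycle_image n b (reflect_graph b G)"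
  proof
    fix e assume "e \<in> reflect_lab n b (cycle_image n b G)"
    then obtain c1 c2 x y where e: "e = (n - 1 - c1, n - 1 - c2, (dbar b x, dbar b y))"
      "(x, y) \<in> G" "c1 < n" "c2 < n" "int n * int y - int x + int c1 = int b * int c2"
      by (auto simp: cycle_image_def reflect_lab_def)
    have "x < b" "y < b"
      using e(2) assms by auto
    then show "e \<in> cycle_image n b (reflect_graph b G)"
      using e carry_equation_reflect[of x b y c1 n c2]
      by (auto simp: cycle_image_def reflect_graph_def)
  qed
qed

lemma zero_in_reflect_lab_iff:
  assumes "\<And>c1 c2 l. (c1, c2, l) \<in> L \<Longrightarrow> c1 < n \<and> c2 < n"
  shows "0 \<in> lab_vertices (reflect_lab n b L) \<longleftrightarrow> n - 1 \<in> lab_vertices L"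
proof
  assume "0 \<in> lab_vertices (reflect_lab n b L)"
  then obtain c1 c2 l where "(c1, c2, l) \<in> L" "n - 1 - c1 = 0 \<or> n - 1 - c2 = 0"
    by (fastforce simp: lab_vertices_def reflect_lab_def)
  moreover from this have "c1 = n - 1 \<or> c2 = n - 1"
    using assms by fastforce
  ultimately show "n - 1 \<in> lab_vertices L"
    unfolding lab_vertices_def by blast
next
  assume "n - 1 \<in> lab_vertices L"
  then obtain c1 c2 d1 d2 where "(c1, c2, (d1, d2)) \<in> L" "c1 = n - 1 \<or> c2 = n - 1"
    by (fastforce simp: lab_vertices_def)
  then have "(n - 1 - c1, n - 1 - c2, (dbar b d1, dbar b d2)) \<in> reflect_lab n b L"
    and "n - 1 - c1 = 0 \<or> n - 1 - c2 = 0"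
    unfolding reflect_lab_def by auto
  then show "0 \<in> lab_vertices (reflect_lab n b L)"
    unfolding lab_vertices_def by force
qed

definition rotation :: "nat \<Rightarrow> nat \<Rightarrow> nat \<Rightarrow> nat" where
  "rotation N m i = (if i < N then (i + m) mod N else i)"

lemma rotation_permutes: "rotation N m permutes {..<N}"
proof (rule bij_imp_permutes)
  have "i = j" if "i < N" "j < N" "i \<le> j" "(j + m) mod N = (i + m) mod N" for i j
  proof -
    have "N dvd j - i"
      using mod_eq_dvd_iff_nat[of "i + m" "j + m" N] that by simp
    then show ?thesis
      using that by (cases "j - i = 0") (auto dest: dvd_imp_le)
  qed
  then have "inj_on (rotation N m) {..<N}"
    unfolding inj_on_def rotation_def by (metis lessThan_iff nat_le_linear)
  moreover have "rotation N m ` {..<N} \<subseteq> {..<N}"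
    by (auto simp: rotation_def)
  ultimately show "bij_betw (rotation N m) {..<N} {..<N}"
    by (simp add: bij_betw_def endo_inj_surj)
  show "\<And>i. i \<notin> {..<N} \<Longrightarrow> rotation N m i = i"
    by (simp add: rotation_def)
qed

lemma perm_graph_eq_image: "perm_graph k d \<sigma> = (\<lambda>j. (d j, d (\<sigma> j))) ` {0..k}"
  by (auto simp: perm_graph_def)

lemma perm_graph_conjugate:
  assumes "\<rho> permutes {0..k}"
  shows "perm_graph k (d \<circ> \<rho>) (inv \<rho> \<circ> \<sigma> \<circ> \<rho>) = perm_graph k d \<sigma>"
proof -
  have "perm_graph k (d \<circ> \<rho>) (inv \<rho> \<circ> \<sigma> \<circ> \<rho>) = (\<lambda>j. (d j, d (\<sigma> j))) ` \<rho> ` {0..k}"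
    unfolding perm_graph_eq_image using permutes_inverses(1)[OF assms] by (simp add: image_image)
  then show ?thesis
    by (simp add: permutes_image[OF assms] perm_graph_eq_image)
qed

lemma perm_graph_complement:
  "perm_graph k (dbar b \<circ> d) \<sigma> = reflect_graph b (perm_graph k d \<sigma>)"
  by (auto simp: perm_graph_def reflect_graph_def)

locale permutiple =
  fixes n b k :: nat and d \<sigma> :: "nat \<Rightarrow> nat"
  assumes n_pos: "0 < n" and n_le_b: "n \<le> b"
    and permutiple: "is_permutiple_sigma n b k d \<sigma>"
begin

lemma sigma_permutes: "\<sigma> permutes {0..k}"
  using permutiple by (simp add: is_permutiple_sigma_def)

lemma digit_less: "i \<le> k \<Longrightarrow> d i < b"
  using permutiple by (simp add: is_permutiple_sigma_def)

sublocale digit_multiple n b "Suc k" d "d \<circ> \<sigma>"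
proof
  show "\<And>i. i < Suc k \<Longrightarrow> d i < b" and "\<And>i. i < Suc k \<Longrightarrow> (d \<circ> \<sigma>) i < b"
    using digit_less permutes_in_image[OF sigma_permutes] by auto
  show "low_value b d (Suc k) = int n * low_value b (d \<circ> \<sigma>) (Suc k)"
    using permutiple by (simp add: is_permutiple_sigma_def flip: digval_eq_low_value)
qed (fact n_pos)

lemma carry_equation:
  "j \<le> k \<Longrightarrow> int n * int (d (\<sigma> j)) - int (d j) + int (carry j) = int b * int (carry (Suc j))"
  using carry_step[of j] by simp

lemma carry_edge_in_cycle_image:
  "j \<le> k \<Longrightarrow> (carry j, carry (Suc j), (d j, d (\<sigma> j))) \<in> cycle_image n b (perm_graph k d \<sigma>)"
  using carry_equation[of j] carry_less[of j] carry_less[of "Suc j"]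
  by (auto simp: cycle_image_def perm_graph_def)

lemma perm_graph_subset_mother_graph: "perm_graph k d \<sigma> \<subseteq> mother_graph n b"
proof
  fix e assume "e \<in> perm_graph k d \<sigma>"
  then obtain j where j: "j \<le> k" and e: "e = (d j, d (\<sigma> j))"
    by (auto simp: perm_graph_def)
  define v where "v = d j + (b - n) * d (\<sigma> j)"
  have "int v = int (d j) + (int b - int n) * int (d (\<sigma> j))"
    using n_le_b by (simp add: v_def of_nat_diff)
  also have "\<dots> = int (carry j) + int b * (int (d (\<sigma> j)) - int (carry (Suc j)))"
    using carry_equation[OF j] by (simp add: algebra_simps)
  finally have "int (v mod b) = int (carry j)"
    using carry_less[of j] n_le_b j by (simp add: of_nat_mod)
  then have "v mod b \<le> n - 1"
    using carry_less[of j] j by simp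
  moreover have "d j < b" "d (\<sigma> j) < b"
    using digit_less j permutes_in_image[OF sigma_permutes] by auto
  ultimately show "e \<in> mother_graph n b"
    by (simp add: mother_graph_def e v_def)
qed

lemma perm_graph_reverse_path:
  assumes "(x, y) \<in> perm_graph k d \<sigma>"
  shows "(y, x) \<in> (perm_graph k d \<sigma>)\<^sup>*"
proof -
  obtain j where j: "j \<le> k" and xy: "x = d j" "y = d (\<sigma> j)"
    using assms by (auto simp: perm_graph_def)
  obtain r where r: "0 < r" "(\<sigma> ^^ r) j = j"
    using permutation_self[OF permutes_imp_permutation[OF _ sigma_permutes]] by blast
  have "(d (\<sigma> j), d ((\<sigma> ^^ Suc t) j)) \<in> (perm_graph k d \<sigma>)\<^sup>*" for t
  proof (induction t)
    case (Suc t)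
    have "(\<sigma> ^^ Suc t) j \<le> k"
      using permutes_in_funpow_image[OF sigma_permutes, of j "Suc t"] j by simp
    then have "(d ((\<sigma> ^^ Suc t) j), d ((\<sigma> ^^ Suc (Suc t)) j)) \<in> perm_graph k d \<sigma>"
      by (auto simp: perm_graph_def)
    with Suc show ?case
      by (rule rtrancl_into_rtrancl)
  qed simp
  from this[of "r - 1"] show ?thesis
    using r xy by simp
qed

lemma Gamma_lab_perm_graph:
  "Gamma_lab n b (perm_graph k d \<sigma>) = cycle_image n b (perm_graph k d \<sigma>)"
  using Gamma_lab_eq_cycle_image perm_graph_subset_mother_graph perm_graph_reverse_path by blast

lemma zero_in_cycle_image_vertices: "0 \<in> lab_vertices (cycle_image n b (perm_graph k d \<sigma>))"
  using carry_edge_in_cycle_image[of 0] unfolding lab_vertices_def by force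

lemma cycle_image_carries:
  assumes "(c1, c2, (d j, d (\<sigma> j))) \<in> cycle_image n b (perm_graph k d \<sigma>)" and "j \<le> k"
  shows "c1 = carry j \<and> c2 = carry (Suc j)"
proof (rule carry_equation_unique)
  show "int n * int (d (\<sigma> j)) - int (d j) + int c1 = int b * int c2" and "c1 < b"
    using assms(1) n_le_b by (auto simp: cycle_image_def)
  show "int n * int (d (\<sigma> j)) - int (d j) + int (carry j) = int b * int (carry (Suc j))"
    using carry_equation[OF assms(2)] .
  show "carry j < b"
    using carry_less[of j] assms(2) n_le_b by simp
qed

lemma rotated_complement_permutiple:
  assumes "m \<le> Suc k" and "carry m = n - 1"
  defines "\<rho> \<equiv> rotation (Suc k) m"
  shows "is_permutiple_sigma n b k (dbar b \<circ> d \<circ> \<rho>) (inv \<rho> \<circ> \<sigma> \<circ> \<rho>)"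
    and "perm_graph k (dbar b \<circ> d \<circ> \<rho>) (inv \<rho> \<circ> \<sigma> \<circ> \<rho>)
      = reflect_graph b (perm_graph k d \<sigma>)"
proof -
  have \<rho>_permutes: "\<rho> permutes {0..k}"
    using rotation_permutes[of "Suc k" m] by (simp add: \<rho>_def lessThan_Suc_atMost atLeast0AtMost)
  show "perm_graph k (dbar b \<circ> d \<circ> \<rho>) (inv \<rho> \<circ> \<sigma> \<circ> \<rho>) = reflect_graph b (perm_graph k d \<sigma>)"
    by (simp only: perm_graph_conjugate[OF \<rho>_permutes] perm_graph_complement)
  have "int (digval b k (dbar b \<circ> d \<circ> \<rho>))
      = low_value b (\<lambda>i. dbar b (d ((i + m) mod Suc k))) (Suc k)"
    unfolding digval_eq_low_value by (rule low_value_cong) (simp add: \<rho>_def rotation_def)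
  also have "\<dots> = int n * low_value b (\<lambda>i. dbar b ((d \<circ> \<sigma>) ((i + m) mod Suc k))) (Suc k)"
    by (rule rotated_complement_multiple[OF assms(1,2)])
  also have "\<dots> = int n * int (digval b k (dbar b \<circ> d \<circ> \<rho> \<circ> (inv \<rho> \<circ> \<sigma> \<circ> \<rho>)))"
    unfolding digval_eq_low_value using permutes_inverses(1)[OF \<rho>_permutes]
    by (simp cong: low_value_cong add: \<rho>_def rotation_def)
  finally have "digval b k (dbar b \<circ> d \<circ> \<rho>)
      = n * digval b k (dbar b \<circ> d \<circ> \<rho> \<circ> (inv \<rho> \<circ> \<sigma> \<circ> \<rho>))"
    by (simp only: of_nat_mult[symmetric] of_nat_eq_iff)
  moreover have "inv \<rho> \<circ> \<sigma> \<circ> \<rho> permutes {0..k}"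
    by (intro permutes_compose permutes_inv \<rho>_permutes sigma_permutes)
  moreover have "dbar b x < b" for x
    using n_pos n_le_b by (simp add: dbar_def)
  ultimately show "is_permutiple_sigma n b k (dbar b \<circ> d \<circ> \<rho>) (inv \<rho> \<circ> \<sigma> \<circ> \<rho>)"
    by (simp add: is_permutiple_sigma_def)
qed

lemma top_state_imp_reflected_permutiple:
  assumes "n - 1 \<in> lab_vertices (Gamma_lab n b (perm_graph k d \<sigma>))"
  shows "\<exists>k' d' \<sigma>'. is_permutiple_sigma n b k' d' \<sigma>' \<and>
           perm_graph k' d' \<sigma>' = reflect_graph b (perm_graph k d \<sigma>)"
proof -
  obtain c1 c2 j where j: "j \<le> k" and top: "c1 = n - 1 \<or> c2 = n - 1"
    and "(c1, c2, (d j, d (\<sigma> j))) \<in> cycle_image n b (perm_graph k d \<sigma>)"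
    using assms unfolding Gamma_lab_perm_graph lab_vertices_def
    by (auto simp: cycle_image_def perm_graph_def)
  then have "c1 = carry j" and "c2 = carry (Suc j)"
    using cycle_image_carries by blast+
  then obtain m where "m \<le> Suc k" and "carry m = n - 1"
    using j top by (metis le_SucI Suc_le_mono)
  then show ?thesis
    using rotated_complement_permutiple by blast
qed

lemma reflected_permutiple_imp_zero_state:
  assumes "is_permutiple_sigma n b k' d' \<sigma>'"
    and "perm_graph k' d' \<sigma>' = reflect_graph b (perm_graph k d \<sigma>)"
  shows "0 \<in> lab_vertices (reflect_lab n b (Gamma_lab n b (perm_graph k d \<sigma>)))"
proof -
  interpret reflected: permutiple n b k' d' \<sigma>'
    using assms(1) n_pos n_le_b by unfold_locales
  have "perm_graph k d \<sigma> \<subseteq> {..<b} \<times> {..<b}"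
    using perm_graph_subset_mother_graph by (auto simp: mother_graph_def)
  then have "cycle_image n b (perm_graph k' d' \<sigma>')
      = reflect_lab n b (Gamma_lab n b (perm_graph k d \<sigma>))"
    unfolding assms(2) Gamma_lab_perm_graph by (rule cycle_image_reflect_graph)
  then show ?thesis
    using reflected.zero_in_cycle_image_vertices by simp
qed

end

theorem theorem15:
  fixes n b k :: nat and d \<sigma> :: "nat \<Rightarrow> nat"
  assumes "1 < n" and "n < b"
    and "is_permutiple_sigma n b k d \<sigma>"
  shows "((\<exists>k' d' \<sigma>'. is_permutiple_sigma n b k' d' \<sigma>' \<and>
             perm_graph k' d' \<sigma>' = reflect_graph b (perm_graph k d \<sigma>))
          \<longleftrightarrow> 0 \<in> lab_vertices (reflect_lab n b (Gamma_lab n b (perm_graph k d \<sigma>))))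
       \<and> (0 \<in> lab_vertices (reflect_lab n b (Gamma_lab n b (perm_graph k d \<sigma>)))
          \<longleftrightarrow> n - 1 \<in> lab_vertices (Gamma_lab n b (perm_graph k d \<sigma>)))"
proof -
  interpret permutiple n b k d \<sigma>
    using assms by unfold_locales auto
  have "0 \<in> lab_vertices (reflect_lab n b (Gamma_lab n b (perm_graph k d \<sigma>)))
      \<longleftrightarrow> n - 1 \<in> lab_vertices (Gamma_lab n b (perm_graph k d \<sigma>))"
    by (rule zero_in_reflect_lab_iff) (auto simp: Gamma_lab_def cycle_image_def)
  then show ?thesis
    using reflected_permutiple_imp_zero_state top_state_imp_reflected_permutiple
    by blast
qed

end
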